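(* Let $D$ be a division algebra and let $S$ be a ring extension of $D$ which is automorphically normalizable over $D$. If $S$ is a division algebra, then $S$ is finitely generated as a left $D$-module.
   Context: All rings are associative with unity. For a ring $S\supseteq D$, $a\in S$ is automorphic over $D$ with respect to $\tau\in\mathrm{Aut}(D)$ if $ab=\tau(b)a$ for all $b\in D$. Commuting $a_1,\ldots,a_m\in S$ are (left) algebraically independent over $D$ if the monomials $a_1^{i_1}\cdots a_m^{i_m}$ are left linearly independent over $D$. $S$ is automorphically normalizable over $D$ if there exist $m\ge0$ and commuting $a_1,\ldots,a_m\in S$, automorphic over $D$ with respect to pairwise commuting automorphisms $\tau_1,\ldots,\tau_m$ of $D$, left algebraically independent over $D$, such that $S$ is finitely generated as a left module over the subring $D[a_1,\ldots,a_m]$ generated by $D\cup\{a_1,\ldots,a_m\}$. *)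

theory Defs
  imports Main
begin

text \<open>All structures live inside one ambient ring, the type 'a; the ring S is UNIV.\<close>

definition subdivring :: "'a::division_ring set \<Rightarrow> bool" where
  "subdivring D \<longleftrightarrow> 0 \<in> D \<and> 1 \<in> D \<and>
     (\<forall>x\<in>D. \<forall>y\<in>D. x + y \<in> D \<and> x * y \<in> D) \<and>
     (\<forall>x\<in>D. - x \<in> D) \<and> (\<forall>x\<in>D. x \<noteq> 0 \<longrightarrow> inverse x \<in> D)"

definition ring_aut_on :: "'a::ring_1 set \<Rightarrow> ('a \<Rightarrow> 'a) \<Rightarrow> bool" where
  "ring_aut_on D \<tau> \<longleftrightarrow> bij_betw \<tau> D D \<and> \<tau> 1 = 1 \<and>
     (\<forall>x\<in>D. \<forall>y\<in>D. \<tau> (x + y) = \<tau> x + \<tau> y \<and> \<tau> (x * y) = \<tau> x * \<tau> y)"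

definition automorphic :: "'a::ring_1 set \<Rightarrow> ('a \<Rightarrow> 'a) \<Rightarrow> 'a \<Rightarrow> bool" where
  "automorphic D \<tau> a \<longleftrightarrow> (\<forall>b\<in>D. a * b = \<tau> b * a)"

definition expvecs :: "nat \<Rightarrow> (nat \<Rightarrow> nat) set" where
  "expvecs m = {e. \<forall>k. m \<le> k \<longrightarrow> e k = 0}"

definition monom :: "(nat \<Rightarrow> 'a::ring_1) \<Rightarrow> nat \<Rightarrow> (nat \<Rightarrow> nat) \<Rightarrow> 'a" where
  "monom a m e = foldr (\<lambda>k p. a k ^ e k * p) [0..<m] 1"

definition left_alg_indep :: "'a::ring_1 set \<Rightarrow> (nat \<Rightarrow> 'a) \<Rightarrow> nat \<Rightarrow> bool" where
  "left_alg_indep D a m \<longleftrightarrow>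
     (\<forall>E c. finite E \<and> E \<subseteq> expvecs m \<and> (\<forall>e\<in>E. c e \<in> D) \<and>
            (\<Sum>e\<in>E. c e * monom a m e) = 0 \<longrightarrow> (\<forall>e\<in>E. c e = 0))"

inductive_set gen_subring :: "'a::ring_1 set \<Rightarrow> 'a set" for X where
  gen_base: "x \<in> X \<Longrightarrow> x \<in> gen_subring X"
| gen_zero: "0 \<in> gen_subring X"
| gen_one: "1 \<in> gen_subring X"
| gen_add: "x \<in> gen_subring X \<Longrightarrow> y \<in> gen_subring X \<Longrightarrow> x + y \<in> gen_subring X"
| gen_neg: "x \<in> gen_subring X \<Longrightarrow> - x \<in> gen_subring X"
| gen_mult: "x \<in> gen_subring X \<Longrightarrow> y \<in> gen_subring X \<Longrightarrow> x * y \<in> gen_subring X"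

definition fin_gen_left_module :: "'a::ring_1 set \<Rightarrow> bool" where
  "fin_gen_left_module R \<longleftrightarrow>
     (\<exists>F. finite F \<and> (\<forall>s. \<exists>r. (\<forall>f\<in>F. r f \<in> R) \<and> s = (\<Sum>f\<in>F. r f * f)))"

definition automorphically_normalizable :: "'a::ring_1 set \<Rightarrow> bool" where
  "automorphically_normalizable D \<longleftrightarrow>
     (\<exists>m a \<tau>.
        (\<forall>i<m. \<forall>j<m. a i * a j = a j * a i) \<and>
        (\<forall>i<m. ring_aut_on D (\<tau> i) \<and> automorphic D (\<tau> i) (a i)) \<and>
        (\<forall>i<m. \<forall>j<m. \<forall>x\<in>D. \<tau> i (\<tau> j x) = \<tau> j (\<tau> i x)) \<and>
        left_alg_indep D a m \<and>
        fin_gen_left_module (gen_subring (D \<union> a ` {..<m})))"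

end

(*
  Let m > 0, t = a 0, u = inverse t and R = D[a 0, ..., a (m - 1)]. As S is a finitely generated left
  R-module and R is spanned over D by monomials with x^d b = twist d b x^d, ascending chains of left
  R-submodules of S stabilise: pull the chain back to coefficient vectors over the skew polynomial
  ring; in a strictly increasing chain choose new elements w n with minimal leading terms; Dickson's
  lemma gives p < q such that the leading term of w p divides that of w q, and cancelling it from w q
  produces a new element of smaller leading term. For the chain R + R u + ... + R u^(n - 1) this makes
  u integral over R, so u lies in R. But a 0 * r = 1 has no solution r in R: the left algebraic
  independence of the monomials lets one compare constant coefficients. Hence m = 0 and R = D.
*)

theory Submission
  imports Defs "HOL-Library.Function_Algebras" "HOL-Library.Fun_Lexorder" "HOL-Library.Infinite_Set"
begin

section \<open>Exponent vectors, the term order and Dickson's lemma\<close>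

lemma expvecs_add: "d \<in> expvecs m \<Longrightarrow> e \<in> expvecs m \<Longrightarrow> d + e \<in> expvecs m"
  by (simp add: expvecs_def)

lemma expvecs_diff: "e \<in> expvecs m \<Longrightarrow> e - d \<in> expvecs m"
  by (simp add: expvecs_def)

lemma zero_in_expvecs: "0 \<in> expvecs m"
  by (simp add: expvecs_def)

lemma fun_upd_in_expvecs: "i < m \<Longrightarrow> 0(i := s) \<in> expvecs m"
  by (simp add: expvecs_def)

lemma le_add_fun: "d \<le> d + (e :: 'b \<Rightarrow> nat)"
  by (simp add: le_fun_def)

lemma add_diff_fun: "d \<le> e \<Longrightarrow> d + (e - d) = (e :: 'b \<Rightarrow> nat)"
  by (simp add: le_fun_def fun_eq_iff)

lemma less_fun_add_left: "less_fun e e' \<Longrightarrow> less_fun (d + e) (d + (e' :: nat \<Rightarrow> nat))"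
  unfolding less_fun_def by auto

lemma lex_map_upt_if_less_fun:
  assumes "e \<in> expvecs m" "e' \<in> expvecs m" "less_fun e e'"
  shows "(map e [0..<m], map e' [0..<m]) \<in> lex less_than"
proof -
  obtain i where i: "e i < e' i" "\<And>i'. i' < i \<Longrightarrow> e i' = e' i'"
    using assms(3) unfolding less_fun_def by blast
  have "i < m"
    using i(1) assms(1,2) unfolding expvecs_def by (cases "m \<le> i") auto
  moreover have "take i (map e [0..<m]) = take i (map e' [0..<m])"
    using i(2) \<open>i < m\<close> by (simp add: take_map)
  ultimately show ?thesis
    unfolding lexord_lex lexord_take_index_conv using i(1) by (intro conjI disjI2 exI[of _ i]) simp_all
qed

text \<open>A term \<open>(j, e)\<close> stands for the monomial \<open>x\<^sup>e\<close> in coordinate \<open>j\<close>; \<open>term_less\<close> is the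
  position-over-term lexicographic order.\<close>

definition term_less :: "nat \<times> (nat \<Rightarrow> nat) \<Rightarrow> nat \<times> (nat \<Rightarrow> nat) \<Rightarrow> bool" where
  "term_less x y \<longleftrightarrow> fst x < fst y \<or> fst x = fst y \<and> less_fun (snd x) (snd y)"

lemma term_less_trans: "term_less x y \<Longrightarrow> term_less y z \<Longrightarrow> term_less x z"
  unfolding term_less_def using less_fun_trans by auto

lemma term_less_linear:
  assumes "snd x \<in> expvecs m" "snd y \<in> expvecs m"
  shows "x = y \<or> term_less x y \<or> term_less y x"
proof -
  have "{i. snd x i \<noteq> snd y i} \<subseteq> {..<m}"
  proof
    fix i
    assume "i \<in> {i. snd x i \<noteq> snd y i}"
    with assms show "i \<in> {..<m}"
      unfolding expvecs_def by (cases "m \<le> i") auto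
  qed
  then have "finite {i. snd x i \<noteq> snd y i}"
    by (rule finite_subset) simp
  then show ?thesis
    using less_fun_trichotomy unfolding term_less_def by (cases x, cases y) auto
qed

lemma term_less_add_left: "term_less (j, e) (j', e') \<Longrightarrow> term_less (j, d + e) (j', d + e')"
  unfolding term_less_def using less_fun_add_left by auto

lemma wf_term_less: "wf {(x, y). snd x \<in> expvecs m \<and> snd y \<in> expvecs m \<and> term_less x y}"
proof (rule wf_subset)
  show "wf (inv_image (less_than <*lex*> lex less_than) (\<lambda>(j, e). (j, map e [0..<m])))"
    by (intro wf_inv_image wf_lex_prod wf_lex wf_less_than)
  show "{(x, y). snd x \<in> expvecs m \<and> snd y \<in> expvecs m \<and> term_less x y}
      \<subseteq> inv_image (less_than <*lex*> lex less_than) (\<lambda>(j, e). (j, map e [0..<m]))"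
    using lex_map_upt_if_less_fun unfolding term_less_def by auto
qed

lemma finite_has_term_less_max:
  assumes "finite A" "A \<noteq> {}" "snd ` A \<subseteq> expvecs m"
  shows "\<exists>x\<in>A. \<forall>y\<in>A. y = x \<or> term_less y x"
  using assms
proof (induction A rule: finite_ne_induct)
  case (insert z A)
  then obtain x where x: "x \<in> A" "\<forall>y\<in>A. y = x \<or> term_less y x"
    by auto
  consider "z = x \<or> term_less z x" | "term_less x z"
    using term_less_linear[of z m x] x(1) insert.prems by auto
  then show ?case
  proof cases
    case 1
    then show ?thesis
      using x by auto
  next
    case 2
    then have "\<forall>y\<in>insert z A. y = z \<or> term_less y z"
      using x by (auto intro: term_less_trans)
    then show ?thesis
      by auto
  qed
qed simp

lemma nat_seq_has_mono_subseq:
  fixes s :: "nat \<Rightarrow> nat"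
  shows "\<exists>g :: nat \<Rightarrow> nat. strict_mono g \<and> mono (s \<circ> g)"
proof -
  let ?S = "{n. \<forall>n'\<ge>n. s n \<le> s n'}"
  have "\<exists>n\<ge>N. n \<in> ?S" for N
    using ex_has_least_nat[of "\<lambda>n. N \<le> n" N s] by auto
  then have S: "infinite ?S"
    by (simp add: infinite_nat_iff_unbounded_le)
  have "mono (s \<circ> enumerate ?S)"
  proof (rule monoI)
    fix p q :: nat
    assume "p \<le> q"
    then have "enumerate ?S p \<le> enumerate ?S q"
      using S by simp
    then show "(s \<circ> enumerate ?S) p \<le> (s \<circ> enumerate ?S) q"
      using enumerate_in_set[OF S, of p] by simp
  qed
  then show ?thesis
    using strict_mono_enumerate[OF S] by blast
qed

lemma dickson_subseq:
  fixes x :: "nat \<Rightarrow> nat \<Rightarrow> nat"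
  shows "\<exists>g :: nat \<Rightarrow> nat. strict_mono g \<and> (\<forall>i<M. mono (\<lambda>n. x (g n) i))"
proof (induction M)
  case 0
  have "strict_mono (id :: nat \<Rightarrow> nat)"
    by (simp add: strict_mono_def)
  then show ?case
    by blast
next
  case (Suc M)
  then obtain g :: "nat \<Rightarrow> nat" where g: "strict_mono g" "\<forall>i<M. mono (\<lambda>n. x (g n) i)"
    by blast
  obtain h :: "nat \<Rightarrow> nat" where h: "strict_mono h" "mono ((\<lambda>n. x (g n) M) \<circ> h)"
    using nat_seq_has_mono_subseq[of "\<lambda>n. x (g n) M"] by blast
  have "mono (\<lambda>n. x (g (h n)) i)" if "i < Suc M" for i
  proof (cases "i = M")
    case True
    then show ?thesis
      using h(2) by (simp add: comp_def)
  next
    case False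
    show ?thesis
    proof (rule monoI)
      fix p q :: nat
      assume "p \<le> q"
      then have "h p \<le> h q"
        using h(1) by (simp add: strict_mono_less_eq)
      moreover have "mono (\<lambda>n. x (g n) i)"
        using g(2) False that by simp
      ultimately show "x (g (h p)) i \<le> x (g (h q)) i"
        by (auto dest: monoD)
    qed
  qed
  moreover have "strict_mono (\<lambda>n. g (h n))"
    using g(1) h(1) by (simp add: strict_mono_def)
  ultimately show ?case
    by blast
qed

lemma dickson:
  fixes x :: "nat \<Rightarrow> nat \<Rightarrow> nat"
  assumes "\<And>n. x n \<in> expvecs m"
  shows "\<exists>p q. p < q \<and> x p \<le> x q"
proof -
  obtain g :: "nat \<Rightarrow> nat" where g: "strict_mono g" "\<forall>i<m. mono (\<lambda>n. x (g n) i)"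
    using dickson_subseq[of m x] by blast
  have "x (g 0) i \<le> x (g 1) i" for i
  proof (cases "i < m")
    case True
    then have "mono (\<lambda>n. x (g n) i)"
      using g(2) by blast
    then show ?thesis
      by (rule monoD) simp
  next
    case False
    then show ?thesis
      using assms[of "g 0"] unfolding expvecs_def by simp
  qed
  moreover have "g 0 < g 1"
    using g(1) by (simp add: strict_mono_def)
  ultimately show ?thesis
    unfolding le_fun_def by (intro exI conjI allI)
qed

lemma dickson_terms:
  fixes z :: "nat \<Rightarrow> nat \<times> (nat \<Rightarrow> nat)"
  assumes "\<And>n. fst (z n) < k" "\<And>n. snd (z n) \<in> expvecs m"
  shows "\<exists>p q. p < q \<and> fst (z p) = fst (z q) \<and> snd (z p) \<le> snd (z q)"
proof -
  have "range (fst \<circ> z) \<subseteq> {..<k}"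
    using assms(1) by auto
  then have "finite (range (fst \<circ> z))"
    using finite_subset[OF _ finite_lessThan] by blast
  then obtain n0 where "infinite {n \<in> UNIV. (fst \<circ> z) n = (fst \<circ> z) n0}"
    using pigeonhole_infinite[OF infinite_UNIV_nat] by blast
  then have S: "infinite {n. fst (z n) = fst (z n0)}"
    by simp
  let ?g = "enumerate {n. fst (z n) = fst (z n0)}"
  obtain p q where "p < q" "snd (z (?g p)) \<le> snd (z (?g q))"
    using dickson[of "\<lambda>n. snd (z (?g n))" m, OF assms(2)] by blast
  moreover have "fst (z (?g p)) = fst (z (?g q))"
    using enumerate_in_set[OF S] by simp
  moreover have "?g p < ?g q"
    using \<open>p < q\<close> S by simp
  ultimately show ?thesis
    by blast
qed

section \<open>Coefficient vectors over a skew polynomial ring\<close>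

text \<open>Skew polynomials over \<open>D\<close> are represented by their coefficient functions on exponent vectors,
  elements of a free module of finite rank by their sequences of coordinates.\<close>

type_synonym 'b skew_poly = "(nat \<Rightarrow> nat) \<Rightarrow> 'b"
type_synonym 'b skew_vec = "nat \<Rightarrow> 'b skew_poly"

lemma ring_aut_on_mem: "ring_aut_on D \<sigma> \<Longrightarrow> x \<in> D \<Longrightarrow> \<sigma> x \<in> D"
  unfolding ring_aut_on_def bij_betw_def by blast

lemma ring_aut_on_eq_0_iff:
  assumes "ring_aut_on D \<sigma>" "0 \<in> D" "x \<in> D"
  shows "\<sigma> x = 0 \<longleftrightarrow> x = 0"
proof -
  have "\<sigma> (0 + 0) = \<sigma> 0 + \<sigma> 0"
    using assms(1,2) unfolding ring_aut_on_def by blast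
  then have "\<sigma> 0 = 0"
    by simp
  moreover have "inj_on \<sigma> D"
    using assms(1) unfolding ring_aut_on_def bij_betw_def by blast
  ultimately show ?thesis
    using assms(2,3) by (metis inj_on_eq_iff)
qed

definition vec_support :: "'b::zero skew_vec \<Rightarrow> (nat \<times> (nat \<Rightarrow> nat)) set" where
  "vec_support V = {(j, e). V j e \<noteq> 0}"

lemma vec_support_empty_iff: "vec_support V = {} \<longleftrightarrow> V = 0"
  by (auto simp: vec_support_def fun_eq_iff)

locale skew_poly_ring =
  fixes D :: "'a::division_ring set" and m :: nat and \<tau> :: "nat \<Rightarrow> 'a \<Rightarrow> 'a"
  assumes subdivring: "subdivring D"
    and ring_aut: "\<And>i. i < m \<Longrightarrow> ring_aut_on D (\<tau> i)"
begin

lemma zero_mem: "0 \<in> D"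
  and one_mem: "1 \<in> D"
  and add_mem: "x \<in> D \<Longrightarrow> y \<in> D \<Longrightarrow> x + y \<in> D"
  and uminus_mem: "x \<in> D \<Longrightarrow> - x \<in> D"
  and mult_mem: "x \<in> D \<Longrightarrow> y \<in> D \<Longrightarrow> x * y \<in> D"
  and inverse_mem: "x \<in> D \<Longrightarrow> inverse x \<in> D"
  using subdivring unfolding subdivring_def by (auto simp: inverse_eq_divide)

definition twist :: "(nat \<Rightarrow> nat) \<Rightarrow> 'a \<Rightarrow> 'a" where
  "twist e = foldr (\<lambda>i. \<tau> i ^^ e i) [0..<m]"

lemma aut_mem: "i < m \<Longrightarrow> x \<in> D \<Longrightarrow> \<tau> i x \<in> D"
  using ring_aut ring_aut_on_mem by blast

lemma aut_eq_0_iff: "i < m \<Longrightarrow> x \<in> D \<Longrightarrow> \<tau> i x = 0 \<longleftrightarrow> x = 0"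
  using ring_aut ring_aut_on_eq_0_iff zero_mem by blast

lemma funpow_aut:
  assumes "i < m" "x \<in> D"
  shows "(\<tau> i ^^ n) x \<in> D \<and> ((\<tau> i ^^ n) x = 0 \<longleftrightarrow> x = 0)"
  by (induction n) (simp_all add: assms aut_mem aut_eq_0_iff)

lemma foldr_twist:
  assumes "set L \<subseteq> {..<m}" "x \<in> D"
  shows "foldr (\<lambda>i. \<tau> i ^^ e i) L x \<in> D \<and> (foldr (\<lambda>i. \<tau> i ^^ e i) L x = 0 \<longleftrightarrow> x = 0)"
  using assms by (induction L) (simp_all add: funpow_aut)

lemma twist_mem: "x \<in> D \<Longrightarrow> twist e x \<in> D"
  using foldr_twist[of "[0..<m]" x e] by (auto simp: twist_def atLeast0LessThan)

lemma twist_eq_0_iff: "x \<in> D \<Longrightarrow> twist e x = 0 \<longleftrightarrow> x = 0"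
  using foldr_twist[of "[0..<m]" x e] by (auto simp: twist_def atLeast0LessThan)

lemma twist_0 [simp]: "twist e 0 = 0"
  using twist_eq_0_iff zero_mem by blast

definition is_poly :: "'a skew_poly \<Rightarrow> bool" where
  "is_poly p \<longleftrightarrow> range p \<subseteq> D \<and> finite {e. p e \<noteq> 0} \<and> {e. p e \<noteq> 0} \<subseteq> expvecs m"

lemma is_poly_zero: "is_poly 0"
  by (simp add: is_poly_def zero_mem)

lemma is_poly_add:
  assumes "is_poly p" "is_poly q"
  shows "is_poly (p + q)"
proof -
  have sub: "{e. (p + q) e \<noteq> 0} \<subseteq> {e. p e \<noteq> 0} \<union> {e. q e \<noteq> 0}"
    by auto
  show ?thesis
    unfolding is_poly_def
  proof (intro conjI)
    show "range (p + q) \<subseteq> D"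
      using assms by (auto simp: is_poly_def intro!: add_mem)
    show "finite {e. (p + q) e \<noteq> 0}"
      using assms by (intro finite_subset[OF sub]) (simp add: is_poly_def)
    show "{e. (p + q) e \<noteq> 0} \<subseteq> expvecs m"
      using assms sub by (auto simp: is_poly_def)
  qed
qed

lemma is_poly_uminus: "is_poly p \<Longrightarrow> is_poly (- p)"
  by (auto simp: is_poly_def uminus_mem)

lemma is_poly_diff: "is_poly p \<Longrightarrow> is_poly q \<Longrightarrow> is_poly (p - q)"
  unfolding diff_conv_add_uminus by (intro is_poly_add is_poly_uminus)

lemma is_poly_single:
  assumes "c \<in> D" "d \<in> expvecs m"
  shows "is_poly (0(d := c))"
proof -
  have "{e. (0(d := c)) e \<noteq> 0} \<subseteq> {d}"
    by auto
  then have "finite {e. (0(d := c)) e \<noteq> 0}"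
    using finite_subset by blast
  then show ?thesis
    unfolding is_poly_def using assms zero_mem by auto
qed

text \<open>Coefficients of \<open>c x\<^sup>d * p\<close> in the skew polynomial ring, where \<open>x\<^sup>d b = twist d b x\<^sup>d\<close>.\<close>

definition term_mult :: "'a \<Rightarrow> (nat \<Rightarrow> nat) \<Rightarrow> 'a skew_poly \<Rightarrow> 'a skew_poly" where
  "term_mult c d p e = (if d \<le> e then c * twist d (p (e - d)) else 0)"

lemma term_mult_add_left [simp]: "term_mult c d p (d + e) = c * twist d (p e)"
  by (simp add: term_mult_def le_add_fun)

lemma support_term_mult: "{e. term_mult c d p e \<noteq> 0} \<subseteq> (+) d ` {e. p e \<noteq> 0}"
proof
  fix e
  assume "e \<in> {e. term_mult c d p e \<noteq> 0}"
  then have "d \<le> e" "p (e - d) \<noteq> 0"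
    unfolding term_mult_def by (auto split: if_splits)
  then show "e \<in> (+) d ` {e. p e \<noteq> 0}"
    by (intro image_eqI[of _ _ "e - d"]) (simp_all add: add_diff_fun)
qed

lemma is_poly_term_mult:
  assumes "c \<in> D" "d \<in> expvecs m" "is_poly p"
  shows "is_poly (term_mult c d p)"
proof -
  have "range (term_mult c d p) \<subseteq> D"
    using assms by (auto simp: term_mult_def is_poly_def intro!: mult_mem twist_mem zero_mem)
  moreover have "finite ((+) d ` {e. p e \<noteq> 0})" "(+) d ` {e. p e \<noteq> 0} \<subseteq> expvecs m"
    using assms(2,3) by (auto simp: is_poly_def intro: expvecs_add)
  ultimately show ?thesis
    unfolding is_poly_def using support_term_mult by (meson finite_subset subset_trans)
qed

definition is_vec :: "nat \<Rightarrow> 'a skew_vec \<Rightarrow> bool" where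
  "is_vec k V \<longleftrightarrow> (\<forall>j. is_poly (V j)) \<and> (\<forall>j\<ge>k. V j = 0)"

definition vec_term_mult :: "'a \<Rightarrow> (nat \<Rightarrow> nat) \<Rightarrow> 'a skew_vec \<Rightarrow> 'a skew_vec" where
  "vec_term_mult c d V j = term_mult c d (V j)"

lemma is_vec_coeff_mem: "is_vec k V \<Longrightarrow> V j e \<in> D"
  unfolding is_vec_def is_poly_def by blast

lemma is_vec_zero: "is_vec k 0"
  by (simp add: is_vec_def is_poly_zero)

lemma is_vec_diff: "is_vec k V \<Longrightarrow> is_vec k W \<Longrightarrow> is_vec k (V - W)"
  by (simp add: is_vec_def is_poly_diff)

lemma is_vec_term_mult: "c \<in> D \<Longrightarrow> d \<in> expvecs m \<Longrightarrow> is_vec k V \<Longrightarrow> is_vec k (vec_term_mult c d V)"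
  by (auto simp: is_vec_def vec_term_mult_def is_poly_term_mult fun_eq_iff term_mult_def)

lemma vec_support_subset: "is_vec k V \<Longrightarrow> vec_support V \<subseteq> {..<k} \<times> expvecs m"
  unfolding is_vec_def is_poly_def vec_support_def by (force simp: not_less[symmetric])

lemma finite_vec_support:
  assumes "is_vec k V"
  shows "finite (vec_support V)"
proof -
  have "vec_support V \<subseteq> (SIGMA j:{..<k}. {e. V j e \<noteq> 0})"
    using vec_support_subset[OF assms] by (auto simp: vec_support_def)
  moreover have "finite (SIGMA j:{..<k}. {e. V j e \<noteq> 0})"
    using assms by (auto simp: is_vec_def is_poly_def)
  ultimately show ?thesis
    by (rule finite_subset)
qed

lemma vec_support_term_mult:
  assumes "(j, e) \<in> vec_support (vec_term_mult c d Q)"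
  obtains e' where "e = d + e'" "(j, e') \<in> vec_support Q"
  using assms support_term_mult[of c d "Q j"] by (auto simp: vec_support_def vec_term_mult_def)

definition lead_term :: "'a skew_vec \<Rightarrow> nat \<times> (nat \<Rightarrow> nat)" where
  "lead_term V = (SOME x. x \<in> vec_support V \<and> (\<forall>y\<in>vec_support V. y = x \<or> term_less y x))"

lemma
  assumes "is_vec k V" "V \<noteq> 0"
  shows lead_term_in_support: "lead_term V \<in> vec_support V"
    and lead_term_max: "y \<in> vec_support V \<Longrightarrow> y = lead_term V \<or> term_less y (lead_term V)"
proof -
  have "snd ` vec_support V \<subseteq> expvecs m"
    using vec_support_subset[OF assms(1)] by auto
  then have "\<exists>x\<in>vec_support V. \<forall>y\<in>vec_support V. y = x \<or> term_less y x"
    using finite_has_term_less_max[of "vec_support V" m] finite_vec_support[OF assms(1)] assms(2)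
    by (simp add: vec_support_empty_iff)
  then have "lead_term V \<in> vec_support V \<and> (\<forall>y\<in>vec_support V. y = lead_term V \<or> term_less y (lead_term V))"
    unfolding lead_term_def by (rule someI2_bex) blast
  then show "lead_term V \<in> vec_support V" "y \<in> vec_support V \<Longrightarrow> y = lead_term V \<or> term_less y (lead_term V)"
    by blast+
qed

lemma lead_term_range: "is_vec k V \<Longrightarrow> V \<noteq> 0 \<Longrightarrow> lead_term V \<in> {..<k} \<times> expvecs m"
  using lead_term_in_support vec_support_subset by blast

lemma vec_support_term_mult_lead_term:
  assumes "is_vec k Q" "Q \<noteq> 0" "lead_term Q = (j, e0)"
    and "y \<in> vec_support (vec_term_mult c d Q)"
  shows "y = (j, d + e0) \<or> term_less y (j, d + e0)"
proof -
  obtain j' e' where y: "y = (j', e')"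
    by (cases y)
  obtain e'' where e'': "e' = d + e''" "(j', e'') \<in> vec_support Q"
    using vec_support_term_mult[of j' e' c d Q] assms(4) y by blast
  then have "(j', e'') = (j, e0) \<or> term_less (j', e'') (j, e0)"
    using lead_term_max[OF assms(1,2), of "(j', e'')"] assms(3) by simp
  then show ?thesis
    using y e''(1) term_less_add_left by auto
qed

lemma lead_term_cancel:
  assumes V: "is_vec k V" "V \<noteq> 0" and Q: "is_vec k Q" "Q \<noteq> 0"
    and same_pos: "fst (lead_term Q) = fst (lead_term V)"
    and divides: "snd (lead_term Q) \<le> snd (lead_term V)"
  obtains c d where "c \<in> D" "d \<in> expvecs m"
    "\<And>y. y \<in> vec_support (V - vec_term_mult c d Q) \<Longrightarrow> term_less y (lead_term V)"
proof -
  obtain j e where LV: "lead_term V = (j, e)"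
    by (cases "lead_term V")
  obtain e0 where LQ: "lead_term Q = (j, e0)"
    using same_pos LV by (cases "lead_term Q") simp
  define d where "d = e - e0"
  have d_e0: "d + e0 = e"
    using divides LV LQ add_diff_fun[of e0 e] by (simp add: d_def add.commute)
  have "e \<in> expvecs m"
    using lead_term_range[OF V] LV by auto
  then have d: "d \<in> expvecs m"
    unfolding d_def by (rule expvecs_diff)
  have Q_lead: "Q j e0 \<in> D" "Q j e0 \<noteq> 0"
    using lead_term_in_support[OF Q] LQ is_vec_coeff_mem[OF Q(1)] by (auto simp: vec_support_def)
  then have twist_lead: "twist d (Q j e0) \<noteq> 0"
    by (simp add: twist_eq_0_iff)
  define c where "c = V j e * inverse (twist d (Q j e0))"
  have c: "c \<in> D"
    unfolding c_def using is_vec_coeff_mem[OF V(1)] Q_lead by (intro mult_mem inverse_mem twist_mem)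
  let ?X = "vec_term_mult c d Q"
  have X_lead: "?X j e = V j e"
    using twist_lead d_e0[symmetric] by (simp add: vec_term_mult_def c_def mult.assoc)
  have "term_less y (j, e)" if y: "y \<in> vec_support (V - ?X)" for y
  proof -
    have "y \<noteq> (j, e)"
      using y X_lead by (auto simp: vec_support_def)
    moreover have "y \<in> vec_support V \<or> y \<in> vec_support ?X"
      using y by (auto simp: vec_support_def)
    ultimately show ?thesis
      using lead_term_max[OF V, of y] LV vec_support_term_mult_lead_term[OF Q LQ, of y c d] d_e0
      by auto
  qed
  then show thesis
    using that[OF c d] LV by simp
qed

definition vec_submodule :: "nat \<Rightarrow> 'a skew_vec set \<Rightarrow> bool" where
  "vec_submodule k K \<longleftrightarrow> (\<forall>V\<in>K. is_vec k V) \<and> 0 \<in> K \<and> (\<forall>V\<in>K. \<forall>W\<in>K. V - W \<in> K) \<and>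
     (\<forall>c\<in>D. \<forall>d\<in>expvecs m. \<forall>V\<in>K. vec_term_mult c d V \<in> K)"

lemma vec_submodule_add:
  assumes "vec_submodule k K" "V \<in> K" "W \<in> K"
  shows "V + W \<in> K"
proof -
  have "V - (0 - W) \<in> K"
    using assms unfolding vec_submodule_def by blast
  then show ?thesis
    by simp
qed

lemma exists_min_lead_term:
  assumes "A \<noteq> {}" "\<And>V. V \<in> A \<Longrightarrow> is_vec k V \<and> V \<noteq> 0"
  shows "\<exists>w\<in>A. \<forall>W\<in>A. \<not> term_less (lead_term W) (lead_term w)"
proof -
  obtain V0 where "V0 \<in> A"
    using assms(1) by blast
  then have "lead_term V0 \<in> lead_term ` A"
    by blast
  then obtain x where x: "x \<in> lead_term ` A"
    and min: "\<And>y. (y, x) \<in> {(x, y). snd x \<in> expvecs m \<and> snd y \<in> expvecs m \<and> term_less x y}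
      \<Longrightarrow> y \<notin> lead_term ` A"
    by (rule wfE_min[OF wf_term_less]) iprover
  then obtain w where w: "w \<in> A" "x = lead_term w"
    by blast
  have exps: "snd (lead_term W) \<in> expvecs m" if "W \<in> A" for W
    using lead_term_range[of k W] assms(2)[OF that] by auto
  have "\<not> term_less (lead_term W) (lead_term w)" if "W \<in> A" for W
    using min[of "lead_term W"] exps[OF that] exps[OF w(1)] that w(2) by auto
  then show ?thesis
    using w(1) by blast
qed

lemma exists_smaller_lead_term:
  assumes K: "vec_submodule k K" and K': "vec_submodule k K'" and "K \<subseteq> K'"
    and V: "V \<in> K' - K" and Q: "Q \<in> K" "Q \<noteq> 0"
    and "fst (lead_term Q) = fst (lead_term V)" "snd (lead_term Q) \<le> snd (lead_term V)"
  shows "\<exists>W\<in>K' - K. term_less (lead_term W) (lead_term V)"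
proof -
  have vecs: "is_vec k V" "V \<noteq> 0" "is_vec k Q"
    using K K' V Q(1) unfolding vec_submodule_def by auto
  obtain c d where cd: "c \<in> D" "d \<in> expvecs m"
    and smaller: "\<And>y. y \<in> vec_support (V - vec_term_mult c d Q) \<Longrightarrow> term_less y (lead_term V)"
    using lead_term_cancel[OF vecs Q(2) assms(7,8)] by blast
  let ?X = "vec_term_mult c d Q"
  let ?W = "V - ?X"
  have X: "?X \<in> K"
    using K Q(1) cd unfolding vec_submodule_def by blast
  have "?W \<in> K'"
    using K' V X \<open>K \<subseteq> K'\<close> unfolding vec_submodule_def by blast
  moreover have "?W \<notin> K"
  proof
    assume "?W \<in> K"
    then have "?W + ?X \<in> K"
      by (rule vec_submodule_add[OF K _ X])
    then show False
      using V by simp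
  qed
  moreover have "?W \<noteq> 0"
    using K \<open>?W \<notin> K\<close> unfolding vec_submodule_def by auto
  then have "lead_term ?W \<in> vec_support ?W"
    using K' \<open>?W \<in> K'\<close> lead_term_in_support unfolding vec_submodule_def by blast
  ultimately show ?thesis
    using smaller by blast
qed

theorem vec_submodule_chain_stabilizes:
  assumes submodule: "\<And>n. vec_submodule k (K n)" and chain: "\<And>n. K n \<subseteq> K (Suc n)"
  shows "\<exists>n. K (Suc n) \<subseteq> K n"
proof (rule ccontr)
  assume "\<nexists>n. K (Suc n) \<subseteq> K n"
  then have new: "K (Suc n) - K n \<noteq> {}" for n
    by blast
  have new_vec: "is_vec k V \<and> V \<noteq> 0" if "V \<in> K (Suc n) - K n" for V n
    using that submodule[of "Suc n"] submodule[of n] unfolding vec_submodule_def by auto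
  have "\<forall>n. \<exists>w. w \<in> K (Suc n) - K n \<and> (\<forall>W\<in>K (Suc n) - K n. \<not> term_less (lead_term W) (lead_term w))"
    using exists_min_lead_term[OF new, of _ k] new_vec by blast
  then obtain w where w: "\<And>n. w n \<in> K (Suc n) - K n"
    and w_min: "\<And>n W. W \<in> K (Suc n) - K n \<Longrightarrow> \<not> term_less (lead_term W) (lead_term (w n))"
    using choice[of "\<lambda>n w. w \<in> K (Suc n) - K n \<and> (\<forall>W\<in>K (Suc n) - K n. \<not> term_less (lead_term W) (lead_term w))"]
    by blast
  have w_vec: "is_vec k (w n)" "w n \<noteq> 0" for n
    using new_vec[OF w] by blast+
  obtain p q where pq: "p < q" "fst (lead_term (w p)) = fst (lead_term (w q))"
    "snd (lead_term (w p)) \<le> snd (lead_term (w q))"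
  proof -
    have "fst (lead_term (w n)) < k" "snd (lead_term (w n)) \<in> expvecs m" for n
      using lead_term_range[OF w_vec] by (auto simp: mem_Times_iff)
    then show thesis
      using dickson_terms[of "\<lambda>n. lead_term (w n)" k m] that by blast
  qed
  have "K (Suc p) \<subseteq> K q"
    using lift_Suc_mono_le[of K, OF chain] pq(1) by simp
  then have "w p \<in> K q"
    using w[of p] by blast
  then obtain W where "W \<in> K (Suc q) - K q" "term_less (lead_term W) (lead_term (w q))"
    using exists_smaller_lead_term[OF submodule submodule chain w[of q] _ w_vec(2) pq(2,3)] by blast
  then show False
    using w_min by blast
qed

end

section \<open>Generated subrings and left submodules\<close>

lemma power_mem_gen_subring: "x \<in> gen_subring X \<Longrightarrow> x ^ n \<in> gen_subring X"
  by (induction n) (simp_all add: gen_one gen_mult)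

lemma gen_subring_diff: "x \<in> gen_subring X \<Longrightarrow> y \<in> gen_subring X \<Longrightarrow> x - y \<in> gen_subring X"
  unfolding diff_conv_add_uminus by (intro gen_add gen_neg)

lemma sum_mem_gen_subring: "(\<And>i. i \<in> I \<Longrightarrow> f i \<in> gen_subring X) \<Longrightarrow> sum f I \<in> gen_subring X"
  by (induction I rule: infinite_finite_induct) (simp_all add: gen_zero gen_add)

lemma gen_subring_subdivring:
  assumes "subdivring D"
  shows "gen_subring D \<subseteq> D"
proof
  fix x
  assume "x \<in> gen_subring D"
  then show "x \<in> D"
    by (induction rule: gen_subring.induct) (use assms in \<open>auto simp: subdivring_def\<close>)
qed

lemma fin_gen_left_module_mono:
  assumes "R \<subseteq> R'" "fin_gen_left_module R"
  shows "fin_gen_left_module R'"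
proof -
  obtain F where "finite F" and gen: "\<And>s. \<exists>r. (\<forall>f\<in>F. r f \<in> R) \<and> s = (\<Sum>f\<in>F. r f * f)"
    using assms(2) unfolding fin_gen_left_module_def by blast
  have "\<exists>r. (\<forall>f\<in>F. r f \<in> R') \<and> s = (\<Sum>f\<in>F. r f * f)" for s
    using gen[of s] assms(1) by blast
  then show ?thesis
    unfolding fin_gen_left_module_def using \<open>finite F\<close> by blast
qed

definition left_submodule :: "'a::ring_1 set \<Rightarrow> 'a set \<Rightarrow> bool" where
  "left_submodule R N \<longleftrightarrow> 0 \<in> N \<and> (\<forall>x\<in>N. \<forall>y\<in>N. x - y \<in> N) \<and> (\<forall>r\<in>R. \<forall>x\<in>N. r * x \<in> N)"

definition left_span_powers :: "'a::ring_1 set \<Rightarrow> 'a \<Rightarrow> nat \<Rightarrow> 'a set" where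
  "left_span_powers R u n = {\<Sum>i<n. r i * u ^ i | r. \<forall>i<n. r i \<in> R}"

lemma left_submodule_left_span_powers:
  "left_submodule (gen_subring X) (left_span_powers (gen_subring X) u n)"
  unfolding left_submodule_def
proof (intro conjI ballI)
  show "0 \<in> left_span_powers (gen_subring X) u n"
    unfolding left_span_powers_def by (intro CollectI exI[of _ "\<lambda>_. 0"]) (simp add: gen_zero)
next
  fix x y
  assume "x \<in> left_span_powers (gen_subring X) u n" "y \<in> left_span_powers (gen_subring X) u n"
  then obtain r s where "\<forall>i<n. r i \<in> gen_subring X" "x = (\<Sum>i<n. r i * u ^ i)"
    "\<forall>i<n. s i \<in> gen_subring X" "y = (\<Sum>i<n. s i * u ^ i)"
    unfolding left_span_powers_def by blast
  then show "x - y \<in> left_span_powers (gen_subring X) u n"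
    unfolding left_span_powers_def
    by (intro CollectI exI[of _ "\<lambda>i. r i - s i"])
      (simp add: gen_subring_diff left_diff_distrib sum_subtractf)
next
  fix c x
  assume "c \<in> gen_subring X" "x \<in> left_span_powers (gen_subring X) u n"
  then obtain r where "\<forall>i<n. r i \<in> gen_subring X" "x = (\<Sum>i<n. r i * u ^ i)"
    unfolding left_span_powers_def by blast
  then show "c * x \<in> left_span_powers (gen_subring X) u n"
    unfolding left_span_powers_def using \<open>c \<in> gen_subring X\<close>
    by (intro CollectI exI[of _ "\<lambda>i. c * r i"]) (simp add: gen_mult sum_distrib_left mult.assoc)
qed

lemma left_span_powers_Suc:
  "left_span_powers (gen_subring X) u n \<subseteq> left_span_powers (gen_subring X) u (Suc n)"
proof
  fix x
  assume "x \<in> left_span_powers (gen_subring X) u n"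
  then obtain r where "\<forall>i<n. r i \<in> gen_subring X" "x = (\<Sum>i<n. r i * u ^ i)"
    unfolding left_span_powers_def by blast
  then show "x \<in> left_span_powers (gen_subring X) u (Suc n)"
    unfolding left_span_powers_def
    by (intro CollectI exI[of _ "r(n := 0)"]) (simp add: gen_zero)
qed

lemma power_mem_left_span_powers: "u ^ n \<in> left_span_powers (gen_subring X) u (Suc n)"
  unfolding left_span_powers_def
  by (intro CollectI exI[of _ "0(n := 1)"]) (simp add: gen_zero gen_one)

lemma inverse_mem_gen_subring_if_integral:
  fixes t :: "'a::division_ring"
  assumes t: "t \<in> gen_subring X"
    and integral: "inverse t ^ n \<in> left_span_powers (gen_subring X) (inverse t) n"
  shows "inverse t \<in> gen_subring X"
proof (cases "t = 0")
  case False
  obtain r where r: "\<forall>i<n. r i \<in> gen_subring X" "inverse t ^ n = (\<Sum>i<n. r i * inverse t ^ i)"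
    using integral unfolding left_span_powers_def by blast
  obtain n' where n: "n = Suc n'"
    using r(2) by (cases n) auto
  have "inverse t = inverse t ^ n * t ^ n'"
    using False by (simp add: n power_inverse mult.assoc)
  also have "\<dots> = (\<Sum>i<n. r i * t ^ (n' - i))"
  proof -
    have "inverse t ^ i * t ^ n' = t ^ (n' - i)" if "i < n" for i
    proof -
      have "t ^ n' = t ^ i * t ^ (n' - i)"
        using that n by (simp flip: power_add)
      then show ?thesis
        using False by (simp add: power_inverse flip: mult.assoc)
    qed
    then show ?thesis
      by (simp add: r(2) sum_distrib_right mult.assoc)
  qed
  also have "\<dots> \<in> gen_subring X"
    using r(1) t by (intro sum_mem_gen_subring gen_mult power_mem_gen_subring) simp_all
  finally show ?thesis .
qed (simp add: gen_zero)

section \<open>The ring generated by \<open>D\<close> and automorphic elements\<close>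

locale automorphic_generators = skew_poly_ring +
  fixes a :: "nat \<Rightarrow> 'a"
  assumes commute: "\<And>i j. i < m \<Longrightarrow> j < m \<Longrightarrow> a i * a j = a j * a i"
    and automorphic: "\<And>i. i < m \<Longrightarrow> automorphic D (\<tau> i) (a i)"
begin

abbreviation generated_ring :: "'a set" where
  "generated_ring \<equiv> gen_subring (D \<union> a ` {..<m})"

lemma power_mult_twist:
  assumes "i < m" "x \<in> D"
  shows "a i ^ n * x = (\<tau> i ^^ n) x * a i ^ n"
proof (induction n)
  case (Suc n)
  have "a i ^ Suc n * x = a i * (\<tau> i ^^ n) x * a i ^ n"
    using Suc by (simp add: mult.assoc)
  also have "a i * (\<tau> i ^^ n) x = (\<tau> i ^^ Suc n) x * a i"
    using automorphic[OF assms(1)] funpow_aut[OF assms] unfolding automorphic_def by simp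
  finally show ?case
    by (simp add: mult.assoc power_commutes)
qed simp

lemma foldr_monom_mult_twist:
  assumes "set L \<subseteq> {..<m}" "x \<in> D"
  shows "foldr (\<lambda>k p. a k ^ e k * p) L 1 * x
    = foldr (\<lambda>i. \<tau> i ^^ e i) L x * foldr (\<lambda>k p. a k ^ e k * p) L 1"
  using assms
proof (induction L)
  case (Cons k L)
  let ?y = "foldr (\<lambda>i. \<tau> i ^^ e i) L x"
  have "?y \<in> D"
    using foldr_twist Cons.prems by simp
  then have "a k ^ e k * ?y = (\<tau> k ^^ e k) ?y * a k ^ e k"
    using power_mult_twist Cons.prems(1) by simp
  with Cons show ?case
    by (simp add: mult.assoc flip: mult.assoc[of "a k ^ e k"])
qed simp

lemma monom_mult_twist: "x \<in> D \<Longrightarrow> monom a m e * x = twist e x * monom a m e"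
  unfolding monom_def twist_def by (rule foldr_monom_mult_twist) auto

lemma foldr_monom_commute:
  assumes "set L \<subseteq> {..<m}" "\<And>j. j < m \<Longrightarrow> x * a j = a j * x"
  shows "x * foldr (\<lambda>k p. a k ^ e k * p) L 1 = foldr (\<lambda>k p. a k ^ e k * p) L 1 * x"
  using assms(1)
proof (induction L)
  case (Cons k L)
  have "x * a k ^ e k = a k ^ e k * x"
    using assms(2) Cons.prems by (simp add: power_commuting_commutes)
  with Cons show ?case
    by (simp add: mult.assoc flip: mult.assoc[of x])
qed simp

lemma monom_add: "monom a m (d + e) = monom a m d * monom a m e"
proof -
  have "foldr (\<lambda>k p. a k ^ (d + e) k * p) L 1
      = foldr (\<lambda>k p. a k ^ d k * p) L 1 * foldr (\<lambda>k p. a k ^ e k * p) L 1"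
    if "set L \<subseteq> {..<m}" for L
    using that
  proof (induction L)
    case (Cons k L)
    have "a k ^ e k * foldr (\<lambda>k p. a k ^ d k * p) L 1 = foldr (\<lambda>k p. a k ^ d k * p) L 1 * a k ^ e k"
      using Cons.prems commute by (intro foldr_monom_commute) (auto intro: power_commuting_commutes)
    with Cons show ?case
      by (simp add: power_add mult.assoc flip: mult.assoc[of "a k ^ e k"])
  qed simp
  then show ?thesis
    unfolding monom_def by (simp add: atLeast0LessThan)
qed

lemma monom_0: "monom a m 0 = 1"
proof -
  have "foldr (\<lambda>k p. a k ^ 0 k * p) L 1 = 1" for L :: "nat list"
    by (induction L) simp_all
  then show ?thesis
    unfolding monom_def .
qed

lemma monom_single: "i < m \<Longrightarrow> monom a m (0(i := 1)) = a i"
proof -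
  have "distinct L \<Longrightarrow> foldr (\<lambda>k p. a k ^ (0(i := 1)) k * p) L 1 = (if i \<in> set L then a i else 1)" for L
    by (induction L) auto
  then show "i < m \<Longrightarrow> monom a m (0(i := 1)) = a i"
    unfolding monom_def by simp
qed

lemma monom_mem: "monom a m e \<in> generated_ring"
proof -
  have "foldr (\<lambda>k p. a k ^ e k * p) L 1 \<in> generated_ring" if "set L \<subseteq> {..<m}" for L
    using that
  proof (induction L)
    case (Cons k L)
    then have "a k \<in> generated_ring"
      by (intro gen_base) simp
    with Cons show ?case
      by (simp add: gen_mult power_mem_gen_subring)
  qed (simp add: gen_one)
  then show ?thesis
    unfolding monom_def by (simp add: atLeast0LessThan)
qed

definition poly_eval :: "'a skew_poly \<Rightarrow> 'a" where
  "poly_eval p = (\<Sum>e | p e \<noteq> 0. p e * monom a m e)"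

lemma poly_eval_superset:
  "finite A \<Longrightarrow> {e. p e \<noteq> 0} \<subseteq> A \<Longrightarrow> poly_eval p = (\<Sum>e\<in>A. p e * monom a m e)"
  unfolding poly_eval_def by (rule sum.mono_neutral_left) auto

lemma poly_eval_0 [simp]: "poly_eval 0 = 0"
  by (simp add: poly_eval_def)

lemma poly_eval_single: "poly_eval (0(d := c)) = c * monom a m d"
  by (subst poly_eval_superset[of "{d}"]) auto

lemma poly_eval_add:
  assumes "is_poly p" "is_poly q"
  shows "poly_eval (p + q) = poly_eval p + poly_eval q"
proof -
  let ?A = "{e. p e \<noteq> 0} \<union> {e. q e \<noteq> 0}"
  have A: "finite ?A"
    using assms by (simp add: is_poly_def)
  have "poly_eval (p + q) = (\<Sum>e\<in>?A. (p e + q e) * monom a m e)"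
    using poly_eval_superset[OF A, of "p + q"] by fastforce
  also have "\<dots> = (\<Sum>e\<in>?A. p e * monom a m e) + (\<Sum>e\<in>?A. q e * monom a m e)"
    by (simp add: distrib_right sum.distrib)
  also have "\<dots> = poly_eval p + poly_eval q"
    using poly_eval_superset[OF A, of p] poly_eval_superset[OF A, of q] by simp
  finally show ?thesis .
qed

lemma poly_eval_uminus: "poly_eval (- p) = - poly_eval p"
  by (simp add: poly_eval_def sum_negf)

lemma poly_eval_diff: "is_poly p \<Longrightarrow> is_poly q \<Longrightarrow> poly_eval (p - q) = poly_eval p - poly_eval q"
  unfolding diff_conv_add_uminus by (simp only: poly_eval_add is_poly_uminus poly_eval_uminus)

lemma poly_eval_term_mult:
  assumes "is_poly p"
  shows "poly_eval (term_mult c d p) = c * monom a m d * poly_eval p"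
proof -
  let ?A = "{e. p e \<noteq> 0}"
  have A: "finite ?A"
    using assms by (simp add: is_poly_def)
  have "poly_eval (term_mult c d p) = (\<Sum>e\<in>(+) d ` ?A. term_mult c d p e * monom a m e)"
    using A support_term_mult by (intro poly_eval_superset) auto
  also have "\<dots> = (\<Sum>e\<in>?A. c * twist d (p e) * monom a m (d + e))"
    by (subst sum.reindex) (auto simp: inj_on_def)
  also have "\<dots> = (\<Sum>e\<in>?A. c * monom a m d * (p e * monom a m e))"
  proof (rule sum.cong)
    fix e
    have "p e \<in> D"
      using assms by (auto simp: is_poly_def)
    then have twist: "monom a m d * p e = twist d (p e) * monom a m d"
      by (rule monom_mult_twist)
    have "c * monom a m d * (p e * monom a m e) = c * (monom a m d * p e) * monom a m e"
      by (simp only: mult.assoc)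
    also have "\<dots> = c * twist d (p e) * monom a m (d + e)"
      by (simp only: twist monom_add mult.assoc)
    finally show "c * twist d (p e) * monom a m (d + e) = c * monom a m d * (p e * monom a m e)"
      by (rule sym)
  qed simp
  also have "\<dots> = c * monom a m d * poly_eval p"
    by (simp add: poly_eval_def sum_distrib_left)
  finally show ?thesis .
qed

lemma poly_eval_sum:
  assumes "finite I" "\<And>i. i \<in> I \<Longrightarrow> is_poly (P i)"
  shows "is_poly (\<Sum>i\<in>I. P i) \<and> poly_eval (\<Sum>i\<in>I. P i) = (\<Sum>i\<in>I. poly_eval (P i))"
  using assms by (induction I rule: finite_induct) (simp_all add: is_poly_zero is_poly_add poly_eval_add)

definition skew_mult :: "'a skew_poly \<Rightarrow> 'a skew_poly \<Rightarrow> 'a skew_poly" where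
  "skew_mult p q = (\<Sum>e | p e \<noteq> 0. term_mult (p e) e q)"

lemma
  assumes "is_poly p" "is_poly q"
  shows is_poly_skew_mult: "is_poly (skew_mult p q)"
    and poly_eval_skew_mult: "poly_eval (skew_mult p q) = poly_eval p * poly_eval q"
proof -
  have A: "finite {e. p e \<noteq> 0}"
    using assms(1) by (simp add: is_poly_def)
  have term_poly: "is_poly (term_mult (p e) e q)" if "p e \<noteq> 0" for e
    using assms that by (intro is_poly_term_mult) (auto simp: is_poly_def)
  have sum: "is_poly (skew_mult p q) \<and>
      poly_eval (skew_mult p q) = (\<Sum>e | p e \<noteq> 0. poly_eval (term_mult (p e) e q))"
    unfolding skew_mult_def by (rule poly_eval_sum[OF A]) (simp add: term_poly)
  then show "is_poly (skew_mult p q)"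
    by blast
  have "poly_eval (skew_mult p q) = (\<Sum>e | p e \<noteq> 0. p e * monom a m e * poly_eval q)"
    using sum by (simp add: poly_eval_term_mult[OF assms(2)])
  also have "\<dots> = poly_eval p * poly_eval q"
    by (simp add: poly_eval_def sum_distrib_right)
  finally show "poly_eval (skew_mult p q) = poly_eval p * poly_eval q" .
qed

lemma term_poly_eval: "c \<in> D \<Longrightarrow> d \<in> expvecs m \<Longrightarrow> \<exists>p. is_poly p \<and> c * monom a m d = poly_eval p"
  using is_poly_single poly_eval_single by metis

lemma generated_ring_poly_eval:
  assumes "x \<in> generated_ring"
  shows "\<exists>p. is_poly p \<and> x = poly_eval p"
  using assms
proof (induction rule: gen_subring.induct)
  case (gen_base x)
  then consider "x \<in> D" | i where "i < m" "x = a i"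
    by blast
  then show ?case
  proof cases
    case 1
    then show ?thesis
      using term_poly_eval[OF 1 zero_in_expvecs] by (simp add: monom_0)
  next
    case 2
    then show ?thesis
      using term_poly_eval[OF one_mem fun_upd_in_expvecs[of i m 1]] monom_single[of i] by simp
  qed
next
  case gen_zero
  show ?case
    using is_poly_zero poly_eval_0 by metis
next
  case gen_one
  show ?case
    using term_poly_eval[OF one_mem zero_in_expvecs] by (simp add: monom_0)
next
  case (gen_add x y)
  then show ?case
    using is_poly_add poly_eval_add by metis
next
  case (gen_neg x)
  then show ?case
    using is_poly_uminus poly_eval_uminus by metis
next
  case (gen_mult x y)
  then show ?case
    using is_poly_skew_mult poly_eval_skew_mult by metis
qed

definition vec_eval :: "(nat \<Rightarrow> 'a) \<Rightarrow> nat \<Rightarrow> 'a skew_vec \<Rightarrow> 'a" where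
  "vec_eval f k V = (\<Sum>j<k. poly_eval (V j) * f j)"

lemma vec_eval_0 [simp]: "vec_eval f k 0 = 0"
  by (simp add: vec_eval_def)

lemma vec_eval_diff:
  "is_vec k V \<Longrightarrow> is_vec k W \<Longrightarrow> vec_eval f k (V - W) = vec_eval f k V - vec_eval f k W"
  by (simp add: vec_eval_def is_vec_def poly_eval_diff left_diff_distrib sum_subtractf)

lemma vec_eval_term_mult:
  "is_vec k V \<Longrightarrow> vec_eval f k (vec_term_mult c d V) = c * monom a m d * vec_eval f k V"
  by (simp add: vec_eval_def is_vec_def vec_term_mult_def poly_eval_term_mult sum_distrib_left mult.assoc)

lemma fin_gen_left_module_vec_eval_onto:
  assumes "fin_gen_left_module generated_ring"
  obtains k f where "\<And>s. \<exists>V. is_vec k V \<and> s = vec_eval f k V"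
proof -
  obtain F where F: "finite F" "\<And>s. \<exists>r. (\<forall>x\<in>F. r x \<in> generated_ring) \<and> s = (\<Sum>x\<in>F. r x * x)"
    using assms unfolding fin_gen_left_module_def by blast
  obtain f where f: "bij_betw f {..<card F} F"
    using ex_bij_betw_nat_finite[OF F(1)] by (auto simp: atLeast0LessThan)
  have "\<exists>V. is_vec (card F) V \<and> s = vec_eval f (card F) V" for s
  proof -
    obtain r where r: "\<forall>x\<in>F. r x \<in> generated_ring" "s = (\<Sum>x\<in>F. r x * x)"
      using F(2) by blast
    have "\<forall>j\<in>{..<card F}. \<exists>p. is_poly p \<and> r (f j) = poly_eval p"
      using r(1) bij_betwE[OF f] generated_ring_poly_eval by blast
    then obtain P where P: "\<And>j. j < card F \<Longrightarrow> is_poly (P j) \<and> r (f j) = poly_eval (P j)"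
      by (metis lessThan_iff)
    define V where "V j = (if j < card F then P j else 0)" for j
    have "is_vec (card F) V"
      using P by (simp add: is_vec_def V_def is_poly_zero)
    moreover have "s = vec_eval f (card F) V"
      unfolding r(2) vec_eval_def V_def using P sum.reindex_bij_betw[OF f, of "\<lambda>x. r x * x"] by simp
    ultimately show ?thesis
      by blast
  qed
  then show thesis
    by (rule that)
qed

theorem left_submodule_chain_stabilizes:
  assumes "fin_gen_left_module generated_ring"
    and submodule: "\<And>n. left_submodule generated_ring (N n)" and chain: "\<And>n. N n \<subseteq> N (Suc n)"
  shows "\<exists>n. N (Suc n) \<subseteq> N n"
proof -
  obtain k f where onto: "\<And>s. \<exists>V. is_vec k V \<and> s = vec_eval f k V"
    using fin_gen_left_module_vec_eval_onto[OF assms(1)] by blast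
  define K where "K n = {V. is_vec k V \<and> vec_eval f k V \<in> N n}" for n
  have "vec_submodule k (K n)" for n
  proof -
    have "c * monom a m d \<in> generated_ring" if "c \<in> D" for c d
      using that monom_mem by (auto intro: gen_mult gen_base)
    then show ?thesis
      using submodule[of n] unfolding vec_submodule_def left_submodule_def K_def
      by (auto simp: is_vec_zero is_vec_diff is_vec_term_mult vec_eval_diff vec_eval_term_mult)
  qed
  moreover have "K n \<subseteq> K (Suc n)" for n
    using chain unfolding K_def by blast
  ultimately obtain n where K: "K (Suc n) \<subseteq> K n"
    using vec_submodule_chain_stabilizes by meson
  have "N (Suc n) \<subseteq> N n"
  proof
    fix s
    assume s: "s \<in> N (Suc n)"
    obtain V where V: "is_vec k V" "s = vec_eval f k V"
      using onto by blast
    then have "V \<in> K n"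
      using s K unfolding K_def by blast
    then show "s \<in> N n"
      using V(2) unfolding K_def by simp
  qed
  then show ?thesis ..
qed

lemma poly_eval_eq_0D:
  assumes "left_alg_indep D a m" "is_poly p" "poly_eval p = 0"
  shows "p = 0"
proof -
  have "finite {e. p e \<noteq> 0}" "{e. p e \<noteq> 0} \<subseteq> expvecs m" "\<forall>e\<in>{e. p e \<noteq> 0}. p e \<in> D"
    using assms(2) unfolding is_poly_def by blast+
  then have "\<forall>e\<in>{e. p e \<noteq> 0}. p e = 0"
    using assms(1)[unfolded left_alg_indep_def, rule_format, of "{e. p e \<noteq> 0}" p] assms(3)
    unfolding poly_eval_def by blast
  then show ?thesis
    by auto
qed

lemma generator_nonzero:
  assumes "left_alg_indep D a m" "i < m"
  shows "a i \<noteq> 0"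
proof
  assume "a i = 0"
  then have "(\<Sum>e\<in>{0(i := 1)}. 1 * monom a m e) = 0"
    using monom_single[OF assms(2)] by simp
  then show False
    using assms(1)[unfolded left_alg_indep_def, rule_format, of "{0(i := 1)}" "\<lambda>_. 1"]
      fun_upd_in_expvecs[OF assms(2)] one_mem by simp
qed

lemma generator_not_right_invertible:
  assumes "left_alg_indep D a m" "i < m" "r \<in> generated_ring"
  shows "a i * r \<noteq> 1"
proof
  assume inv: "a i * r = 1"
  obtain p where p: "is_poly p" "r = poly_eval p"
    using generated_ring_poly_eval[OF assms(3)] by blast
  let ?d = "0(i := 1) :: nat \<Rightarrow> nat"
  \<comment> \<open>\<open>a i * r\<close> has no constant coefficient, unlike \<open>1\<close>\<close>
  let ?q = "term_mult 1 ?d p - 0(0 := 1)"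
  have "is_poly ?q"
    using p(1) by (intro is_poly_diff is_poly_term_mult is_poly_single one_mem fun_upd_in_expvecs
        assms(2) zero_in_expvecs)
  moreover have "poly_eval ?q = 0"
    using inv p assms(2) monom_single[OF assms(2)]
    by (simp add: poly_eval_diff is_poly_term_mult is_poly_single one_mem fun_upd_in_expvecs
        zero_in_expvecs poly_eval_term_mult poly_eval_single monom_0)
  ultimately have "?q = 0"
    by (rule poly_eval_eq_0D[OF assms(1)])
  moreover have "\<not> ?d \<le> 0"
    unfolding le_fun_def not_all by (intro exI[of _ i]) simp
  then have "?q 0 = - 1"
    by (simp add: term_mult_def)
  ultimately show False
    by simp
qed

theorem not_fin_gen_left_module:
  assumes "left_alg_indep D a m" "0 < m"
  shows "\<not> fin_gen_left_module generated_ring"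
proof
  assume "fin_gen_left_module generated_ring"
  then obtain n where "left_span_powers generated_ring (inverse (a 0)) (Suc n)
      \<subseteq> left_span_powers generated_ring (inverse (a 0)) n"
    using left_submodule_chain_stabilizes left_submodule_left_span_powers left_span_powers_Suc by blast
  then have "inverse (a 0) ^ n \<in> left_span_powers generated_ring (inverse (a 0)) n"
    using power_mem_left_span_powers by blast
  moreover have "a 0 \<in> generated_ring"
    using assms(2) by (intro gen_base) simp
  ultimately have "inverse (a 0) \<in> generated_ring"
    by (rule inverse_mem_gen_subring_if_integral[rotated])
  moreover have "a 0 * inverse (a 0) = 1"
    using generator_nonzero[OF assms] by simp
  ultimately show False
    using generator_not_right_invertible[OF assms] by blast
qed

end

theorem proposition2p19:
  fixes D :: "'a::division_ring set"
  assumes "subdivring D"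
    and "automorphically_normalizable D"
  shows "fin_gen_left_module D"
proof -
  obtain m a \<tau> where comm: "\<forall>i<m. \<forall>j<m. a i * a j = a j * a i"
    and aut: "\<forall>i<m. ring_aut_on D (\<tau> i) \<and> automorphic D (\<tau> i) (a i)"
    and indep: "left_alg_indep D a m"
    and fg: "fin_gen_left_module (gen_subring (D \<union> a ` {..<m}))"
    using assms(2) unfolding automorphically_normalizable_def by blast
  show ?thesis
  proof (cases "m = 0")
    case True
    then show ?thesis
      using fg gen_subring_subdivring[OF assms(1)] fin_gen_left_module_mono by auto
  next
    case False
    interpret automorphic_generators D m \<tau> a
      using assms(1) comm aut by unfold_locales auto
    show ?thesis
      using not_fin_gen_left_module[OF indep] False fg by simp
  qed
qed

end
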